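(* For real numbers $a<b$, the structure $([a,b],\oplus,a,b)$, where $x\oplus y=\tfrac{x+y}{2}$, is an interval object in the category of sets: it is an m-convex body, and for every m-convex body $(A,m)$ in sets and all $x,y\in A$ there is a unique midpoint homomorphism $h\colon[a,b]\to A$ with $h(a)=x$ and $h(b)=y$.
   Context: A midpoint set is a set $A$ with $m\colon A\times A\to A$ satisfying $m(x,x)=x$, $m(x,y)=m(y,x)$, $m(m(x,y),m(z,w))=m(m(x,z),m(y,w))$. It is cancellative if $m(x,y)=m(x,z)$ implies $y=z$, and iterative if for every set $X$ and functions $h\colon X\to A$, $t\colon X\to X$ there is a unique $u\colon X\to A$ with $u(x)=m(h(x),u(t(x)))$. An m-convex body is a cancellative iterative midpoint set; a midpoint homomorphism is a function preserving the midpoint operation. *)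

theory Defs
  imports Complex_Main "HOL-Library.FuncSet"
begin

definition midpoint_set :: "'a set \<Rightarrow> ('a \<Rightarrow> 'a \<Rightarrow> 'a) \<Rightarrow> bool" where
  "midpoint_set A m \<longleftrightarrow>
     (\<forall>x\<in>A. \<forall>y\<in>A. m x y \<in> A) \<and>
     (\<forall>x\<in>A. m x x = x) \<and>
     (\<forall>x\<in>A. \<forall>y\<in>A. m x y = m y x) \<and>
     (\<forall>x\<in>A. \<forall>y\<in>A. \<forall>z\<in>A. \<forall>w\<in>A. m (m x y) (m z w) = m (m x z) (m y w))"

definition cancellative :: "'a set \<Rightarrow> ('a \<Rightarrow> 'a \<Rightarrow> 'a) \<Rightarrow> bool" where
  "cancellative A m \<longleftrightarrow> (\<forall>x\<in>A. \<forall>y\<in>A. \<forall>z\<in>A. m x y = m x z \<longrightarrow> y = z)"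

text \<open>Iterativity, with the index sets X ranging over all subsets of the type 'x.
Functions X \<rightarrow> A are represented as extensional functions.\<close>
definition iterative :: "'x itself \<Rightarrow> 'a set \<Rightarrow> ('a \<Rightarrow> 'a \<Rightarrow> 'a) \<Rightarrow> bool" where
  "iterative _ A m \<longleftrightarrow>
     (\<forall>(X::'x set) h t. h \<in> X \<rightarrow> A \<longrightarrow> t \<in> X \<rightarrow> X \<longrightarrow>
        (\<exists>!u. u \<in> X \<rightarrow>\<^sub>E A \<and> (\<forall>x\<in>X. u x = m (h x) (u (t x)))))"

definition m_convex_body :: "'x itself \<Rightarrow> 'a set \<Rightarrow> ('a \<Rightarrow> 'a \<Rightarrow> 'a) \<Rightarrow> bool" where
  "m_convex_body T A m \<longleftrightarrow> midpoint_set A m \<and> cancellative A m \<and> iterative T A m"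

definition midpoint_hom ::
  "'a set \<Rightarrow> ('a \<Rightarrow> 'a \<Rightarrow> 'a) \<Rightarrow> 'b set \<Rightarrow> ('b \<Rightarrow> 'b \<Rightarrow> 'b) \<Rightarrow> ('a \<Rightarrow> 'b) \<Rightarrow> bool" where
  "midpoint_hom A m B n f \<longleftrightarrow> f \<in> A \<rightarrow> B \<and> (\<forall>x\<in>A. \<forall>y\<in>A. f (m x y) = n (f x) (f y))"

end

theory Submission
  imports Defs
begin

text \<open>For the interval, an iteration \<open>u x = (h x + u (t x)) / 2\<close> is solved by the series
  \<open>\<Sum>n. h (t\<^sup>n x) / 2\<^sup>n\<^sup>+\<^sup>1\<close>, and uniquely because the difference of two bounded solutions
  halves at every step. For the universal property, let \<open>T\<close> be the doubling map on \<open>[a, b]\<close>,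
  so that every \<open>r\<close> is the midpoint of \<open>T r\<close> and an endpoint \<open>e r\<close>. A midpoint homomorphism
  \<open>h\<close> with \<open>h a = x\<close>, \<open>h b = y\<close> must satisfy \<open>h r = m (h (e r)) (h (T r))\<close>, an iteration
  in \<open>A\<close>; iterativity gives exactly one solution, cancellation shows that it takes the
  prescribed values at the endpoints, and it preserves midpoints because both
  \<open>(r, s) \<mapsto> h ((r + s) / 2)\<close> and \<open>(r, s) \<mapsto> m (h r) (h s)\<close> solve the same iteration on
  \<open>[a, b]\<^sup>2\<close>, by mediality. Iterativity is only assumed for index sets of naturals;
  iterations over other index sets are solved along the orbits \<open>n \<mapsto> t\<^sup>n x\<close>.\<close>

section \<open>Midpoint sets\<close>

lemma midpoint_set_closed: "midpoint_set A m \<Longrightarrow> p \<in> A \<Longrightarrow> q \<in> A \<Longrightarrow> m p q \<in> A"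
  by (simp add: midpoint_set_def)

lemma midpoint_set_idem: "midpoint_set A m \<Longrightarrow> p \<in> A \<Longrightarrow> m p p = p"
  by (simp add: midpoint_set_def)

lemma midpoint_set_commute: "midpoint_set A m \<Longrightarrow> p \<in> A \<Longrightarrow> q \<in> A \<Longrightarrow> m p q = m q p"
  by (simp add: midpoint_set_def)

lemma midpoint_set_medial:
  "midpoint_set A m \<Longrightarrow> p \<in> A \<Longrightarrow> q \<in> A \<Longrightarrow> r \<in> A \<Longrightarrow> s \<in> A \<Longrightarrow>
    m (m p q) (m r s) = m (m p r) (m q s)"
  by (simp add: midpoint_set_def)

lemma cancellativeD:
  "cancellative A m \<Longrightarrow> p \<in> A \<Longrightarrow> q \<in> A \<Longrightarrow> r \<in> A \<Longrightarrow> m p q = m p r \<Longrightarrow> q = r"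
  by (simp add: cancellative_def)

lemma midpoint_fixed_point_eq:
  assumes "midpoint_set A m" "cancellative A m" "p \<in> A" "q \<in> A" and fixed: "m q p = p"
  shows "p = q"
proof -
  have "m p p = m p q"
    using fixed midpoint_set_idem[OF assms(1,3)] midpoint_set_commute[OF assms(1,3,4)] by simp
  with assms(2-4) show ?thesis by (blast dest: cancellativeD)
qed

section \<open>Iterations\<close>

definition iteration_solution ::
  "'x set \<Rightarrow> ('a \<Rightarrow> 'a \<Rightarrow> 'a) \<Rightarrow> ('x \<Rightarrow> 'a) \<Rightarrow> ('x \<Rightarrow> 'x) \<Rightarrow> ('x \<Rightarrow> 'a) \<Rightarrow> bool" where
  "iteration_solution X m h t u \<longleftrightarrow> (\<forall>x\<in>X. u x = m (h x) (u (t x)))"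

lemma iteration_solutionI:
  "(\<And>x. x \<in> X \<Longrightarrow> u x = m (h x) (u (t x))) \<Longrightarrow> iteration_solution X m h t u"
  by (simp add: iteration_solution_def)

lemma iteration_solutionD:
  "iteration_solution X m h t u \<Longrightarrow> x \<in> X \<Longrightarrow> u x = m (h x) (u (t x))"
  by (simp add: iteration_solution_def)

lemma iterativeD:
  assumes "iterative TYPE('x) A m" "h \<in> X \<rightarrow> A" "t \<in> X \<rightarrow> X"
  shows "\<exists>!u. u \<in> (X::'x set) \<rightarrow>\<^sub>E A \<and> iteration_solution X m h t u"
  using assms(1)[unfolded iterative_def, rule_format, OF assms(2,3)]
  by (simp add: iteration_solution_def)

lemma iterativeI:
  assumes "\<And>(X::'x set) h t. h \<in> X \<rightarrow> A \<Longrightarrow> t \<in> X \<rightarrow> X \<Longrightarrow>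
    \<exists>!u. u \<in> X \<rightarrow>\<^sub>E A \<and> iteration_solution X m h t u"
  shows "iterative TYPE('x) A m"
  using assms by (simp add: iterative_def iteration_solution_def)

lemma funpow_in_funcset: "t \<in> X \<rightarrow> X \<Longrightarrow> x \<in> X \<Longrightarrow> (t ^^ n) x \<in> X"
  by (induction n) auto

lemma iteration_solution_orbit:
  assumes "iteration_solution X m h t u" "t \<in> X \<rightarrow> X" "x \<in> X"
  shows "iteration_solution UNIV m (\<lambda>n. h ((t ^^ n) x)) Suc (\<lambda>n. u ((t ^^ n) x))"
proof (rule iteration_solutionI)
  fix n
  have "(t ^^ n) x \<in> X" by (rule funpow_in_funcset[OF assms(2,3)])
  from iteration_solutionD[OF assms(1) this]
  show "u ((t ^^ n) x) = m (h ((t ^^ n) x)) (u ((t ^^ Suc n) x))" by simp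
qed

lemma iteration_solution_shift:
  assumes "iteration_solution UNIV m f Suc v"
  shows "iteration_solution UNIV m (\<lambda>n. f (Suc n)) Suc (\<lambda>n. v (Suc n))"
proof (rule iteration_solutionI)
  fix n
  show "v (Suc n) = m (f (Suc n)) (v (Suc (Suc n)))"
    by (rule iteration_solutionD[OF assms UNIV_I])
qed

lemma iterative_nat_orbit:
  assumes "iterative TYPE(nat) A m" "h \<in> X \<rightarrow> A" "t \<in> X \<rightarrow> X" "x \<in> X"
  shows "\<exists>!v. v \<in> UNIV \<rightarrow>\<^sub>E A \<and> iteration_solution UNIV m (\<lambda>n. h ((t ^^ n) x)) Suc v"
  by (rule iterativeD[OF assms(1)]) (use assms(2) funpow_in_funcset[OF assms(3,4)] in auto)

lemma iterative_nat_solution_unique: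
  assumes it: "iterative TYPE(nat) A m" and h: "h \<in> X \<rightarrow> A" and t: "t \<in> X \<rightarrow> X"
    and u1: "u1 \<in> X \<rightarrow> A" "iteration_solution X m h t u1"
    and u2: "u2 \<in> X \<rightarrow> A" "iteration_solution X m h t u2"
    and x: "x \<in> X"
  shows "u1 x = u2 x"
proof -
  have "(\<lambda>n. u1 ((t ^^ n) x)) \<in> UNIV \<rightarrow>\<^sub>E A" "(\<lambda>n. u2 ((t ^^ n) x)) \<in> UNIV \<rightarrow>\<^sub>E A"
    using u1(1) u2(1) funpow_in_funcset[OF t x] by auto
  with iterative_nat_orbit[OF it h t x] iteration_solution_orbit[OF u1(2) t x]
    iteration_solution_orbit[OF u2(2) t x]
  have "(\<lambda>n. u1 ((t ^^ n) x)) = (\<lambda>n. u2 ((t ^^ n) x))" by blast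
  from fun_cong[OF this, of 0] show ?thesis by simp
qed

lemma iterative_nat_solution_exists:
  assumes it: "iterative TYPE(nat) A m" and h: "h \<in> X \<rightarrow> A" and t: "t \<in> X \<rightarrow> X"
  obtains u where "u \<in> X \<rightarrow>\<^sub>E A" "iteration_solution X m h t u"
proof
  define orbit_solution where
    "orbit_solution x v \<longleftrightarrow>
      v \<in> UNIV \<rightarrow>\<^sub>E A \<and> iteration_solution UNIV m (\<lambda>n. h ((t ^^ n) x)) Suc v"
    for x v
  define U where "U x = (THE v. orbit_solution x v)" for x
  have U: "orbit_solution x (U x)" if "x \<in> X" for x
    unfolding U_def orbit_solution_def by (rule theI'[OF iterative_nat_orbit[OF it h t that]])
  have U_shift: "U (t x) = (\<lambda>n. U x (Suc n))" if x: "x \<in> X" for x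
  proof -
    have tx: "t x \<in> X" using t x by auto
    have "orbit_solution (t x) (\<lambda>n. U x (Suc n))"
      using U[OF x] iteration_solution_shift
      by (fastforce simp: orbit_solution_def funpow_swap1)
    then show ?thesis
      unfolding U_def orbit_solution_def
      by (rule the1_equality[OF iterative_nat_orbit[OF it h t tx]])
  qed
  show "restrict (\<lambda>x. U x 0) X \<in> X \<rightarrow>\<^sub>E A"
    using U by (auto simp: orbit_solution_def)
  show "iteration_solution X m h t (restrict (\<lambda>x. U x 0) X)"
  proof (rule iteration_solutionI)
    fix x assume x: "x \<in> X"
    have "iteration_solution UNIV m (\<lambda>n. h ((t ^^ n) x)) Suc (U x)"
      using U[OF x] by (simp add: orbit_solution_def)
    from iteration_solutionD[OF this UNIV_I, of 0]
    have "U x 0 = m (h x) (U x (Suc 0))" by simp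
    with x t U_shift[OF x]
    show "restrict (\<lambda>x. U x 0) X x = m (h x) (restrict (\<lambda>x. U x 0) X (t x))"
      by auto
  qed
qed

lemma iteration_solution_pairs:
  assumes A: "midpoint_set A m" and h: "h \<in> S \<rightarrow> A" and t: "t \<in> S \<rightarrow> S"
    and g: "g \<in> S \<rightarrow> A" and sol: "iteration_solution S m h t g"
  shows "iteration_solution (S \<times> S) m (\<lambda>(r, s). m (h r) (h s)) (map_prod t t)
    (\<lambda>(r, s). m (g r) (g s))"
proof (rule iteration_solutionI, clarify)
  fix r s assume rs: "r \<in> S" "s \<in> S"
  then have "t r \<in> S" "t s \<in> S" using t by auto
  then have "m (m (h r) (g (t r))) (m (h s) (g (t s))) =
      m (m (h r) (h s)) (m (g (t r)) (g (t s)))"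
    using rs h g by (blast intro: midpoint_set_medial[OF A])
  then show "m (g r) (g s) =
      m (m (h r) (h s)) (case map_prod t t (r, s) of (r, s) \<Rightarrow> m (g r) (g s))"
    using iteration_solutionD[OF sol rs(1)] iteration_solutionD[OF sol rs(2)] by simp
qed

section \<open>The real interval\<close>

lemma midpoint_set_interval: "midpoint_set {a..b} (\<lambda>x y. (x + y) / (2::real))"
  by (auto simp: midpoint_set_def field_simps)

lemma cancellative_real_midpoint: "cancellative S (\<lambda>x y. (x + y) / (2::real))"
  by (simp add: cancellative_def)

lemma dyadic_series_in_interval:
  fixes f :: "nat \<Rightarrow> real"
  assumes f: "\<And>n. f n \<in> {a..b}"
  shows "summable (\<lambda>n. f n / 2 ^ Suc n)" and "(\<Sum>n. f n / 2 ^ Suc n) \<in> {a..b}"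
proof -
  have weights: "(\<lambda>n. c * (1/2) ^ Suc n) sums c" for c :: real
    using sums_mult[OF power_half_series, of c] by simp
  have "norm (f n / 2 ^ Suc n) \<le> max \<bar>a\<bar> \<bar>b\<bar> * (1/2) ^ Suc n" for n
  proof -
    have "\<bar>f n\<bar> \<le> max \<bar>a\<bar> \<bar>b\<bar>" using f[of n] by auto
    then show ?thesis by (simp add: power_divide divide_right_mono)
  qed
  then show summable: "summable (\<lambda>n. f n / 2 ^ Suc n)"
    by (blast intro: summable_comparison_test' sums_summable[OF weights])
  have "a \<le> (\<Sum>n. f n / 2 ^ Suc n)"
    by (rule sums_le[OF _ weights summable_sums[OF summable]])
      (use f in \<open>auto simp: power_divide divide_right_mono\<close>)
  moreover have "(\<Sum>n. f n / 2 ^ Suc n) \<le> b"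
    by (rule sums_le[OF _ summable_sums[OF summable] weights])
      (use f in \<open>auto simp: power_divide divide_right_mono\<close>)
  ultimately show "(\<Sum>n. f n / 2 ^ Suc n) \<in> {a..b}" by simp
qed

lemma interval_iteration_exists:
  fixes a b :: real
  assumes h: "h \<in> X \<rightarrow> {a..b}" and t: "t \<in> X \<rightarrow> X"
  obtains u where "u \<in> X \<rightarrow>\<^sub>E {a..b}" "iteration_solution X (\<lambda>x y. (x + y) / 2) h t u"
proof
  define s where "s x = (\<Sum>n. h ((t ^^ n) x) / 2 ^ Suc n)" for x
  have orbit: "h ((t ^^ n) x) \<in> {a..b}" if "x \<in> X" for x n
    using h funpow_in_funcset[OF t that] by auto
  have sums: "(\<lambda>n. h ((t ^^ n) x) / 2 ^ Suc n) sums s x" if "x \<in> X" for x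
    unfolding s_def by (rule summable_sums, rule dyadic_series_in_interval(1), rule orbit[OF that])
  show "restrict s X \<in> X \<rightarrow>\<^sub>E {a..b}"
    using dyadic_series_in_interval(2)[OF orbit] by (auto simp: s_def)
  show "iteration_solution X (\<lambda>x y. (x + y) / 2) h t (restrict s X)"
  proof (rule iteration_solutionI)
    fix x assume x: "x \<in> X"
    then have tx: "t x \<in> X" using t by auto
    have "(\<lambda>n. h ((t ^^ Suc n) x) / 2 ^ Suc (Suc n)) sums (s (t x) / 2)"
      using sums_divide[OF sums[OF tx], of 2] by (simp add: funpow_swap1)
    then have "(\<lambda>n. h ((t ^^ n) x) / 2 ^ Suc n) sums (s (t x) / 2 + h x / 2)"
      by (subst (asm) sums_Suc_iff) simp
    from sums_unique2[OF sums[OF x] this] have "s x = (h x + s (t x)) / 2"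
      by simp
    with x tx show "restrict s X x = (h x + restrict s X (t x)) / 2" by simp
  qed
qed

lemma interval_iteration_unique:
  fixes a b :: real
  assumes t: "t \<in> X \<rightarrow> X"
    and u1: "u1 \<in> X \<rightarrow> {a..b}" "iteration_solution X (\<lambda>x y. (x + y) / 2) h t u1"
    and u2: "u2 \<in> X \<rightarrow> {a..b}" "iteration_solution X (\<lambda>x y. (x + y) / 2) h t u2"
    and x: "x \<in> X"
  shows "u1 x = u2 x"
proof -
  have halving: "\<forall>x\<in>X. \<bar>u1 x - u2 x\<bar> \<le> (b - a) / 2 ^ n" for n
  proof (induction n)
    case 0
    show ?case
    proof
      fix x assume "x \<in> X"
      then have "u1 x \<in> {a..b}" "u2 x \<in> {a..b}" using u1(1) u2(1) by auto
      then show "\<bar>u1 x - u2 x\<bar> \<le> (b - a) / 2 ^ 0" by auto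
    qed
  next
    case (Suc n)
    show ?case
    proof
      fix x assume x: "x \<in> X"
      then have "t x \<in> X" using t by auto
      with Suc.IH have IH: "\<bar>u1 (t x) - u2 (t x)\<bar> \<le> (b - a) / 2 ^ n" by blast
      have "u1 x - u2 x = (u1 (t x) - u2 (t x)) / 2"
        using iteration_solutionD[OF u1(2) x] iteration_solutionD[OF u2(2) x] by argo
      then have "\<bar>u1 x - u2 x\<bar> = \<bar>u1 (t x) - u2 (t x)\<bar> / 2" by (simp only: abs_divide abs_numeral)
      also have "\<dots> \<le> (b - a) / 2 ^ n / 2" by (rule divide_right_mono[OF IH]) simp
      also have "\<dots> = (b - a) / 2 ^ Suc n" by simp
      finally show "\<bar>u1 x - u2 x\<bar> \<le> (b - a) / 2 ^ Suc n" .
    qed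
  qed
  have "\<bar>u1 x - u2 x\<bar> \<le> 0"
    by (rule LIMSEQ_le_const[OF LIMSEQ_divide_realpow_zero]) (use halving x in auto)
  then show ?thesis by simp
qed

lemma iterative_interval:
  fixes a b :: real
  shows "iterative TYPE('x) {a..b} (\<lambda>x y. (x + y) / 2)"
proof (rule iterativeI)
  fix X :: "'x set" and h t
  assume h: "h \<in> X \<rightarrow> {a..b}" and t: "t \<in> X \<rightarrow> X"
  show "\<exists>!u. u \<in> X \<rightarrow>\<^sub>E {a..b} \<and> iteration_solution X (\<lambda>x y. (x + y) / 2) h t u"
  proof (rule ex_ex1I)
    show "\<exists>u. u \<in> X \<rightarrow>\<^sub>E {a..b} \<and> iteration_solution X (\<lambda>x y. (x + y) / 2) h t u"
      using interval_iteration_exists[OF h t] by blast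
  next
    fix u1 u2
    assume u1: "u1 \<in> X \<rightarrow>\<^sub>E {a..b} \<and> iteration_solution X (\<lambda>x y. (x + y) / 2) h t u1"
      and u2: "u2 \<in> X \<rightarrow>\<^sub>E {a..b} \<and> iteration_solution X (\<lambda>x y. (x + y) / 2) h t u2"
    show "u1 = u2"
    proof (rule PiE_ext)
      fix x assume "x \<in> X"
      with u1 u2 show "u1 x = u2 x"
        by (blast intro: interval_iteration_unique[OF t] PiE_mem)
    qed (use u1 u2 in blast)+
  qed
qed

lemma m_convex_body_interval:
  fixes a b :: real
  shows "m_convex_body TYPE('x) {a..b} (\<lambda>x y. (x + y) / 2)"
  unfolding m_convex_body_def
  using midpoint_set_interval cancellative_real_midpoint iterative_interval by blast

section \<open>The universal property\<close>

locale interval_universal =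
  fixes A :: "'a set" and m :: "'a \<Rightarrow> 'a \<Rightarrow> 'a" and a b :: real and x y :: 'a
  assumes body: "m_convex_body TYPE(nat) A m"
    and less: "a < b" and x: "x \<in> A" and y: "y \<in> A"
begin

lemma A_midpoint_set: "midpoint_set A m"
  and A_cancellative: "cancellative A m"
  and A_iterative: "iterative TYPE(nat) A m"
  using body by (auto simp: m_convex_body_def)

definition endpoint :: "real \<Rightarrow> real" where
  "endpoint r = (if r \<le> (a + b) / 2 then a else b)"

definition doubling :: "real \<Rightarrow> real" where
  "doubling r = 2 * r - endpoint r"

definition digit :: "real \<Rightarrow> 'a" where
  "digit r = (if r \<le> (a + b) / 2 then x else y)"

lemma endpoint_cases: "endpoint r = a \<or> endpoint r = b"
  by (simp add: endpoint_def)

lemma endpoint_doubling: "(endpoint r + doubling r) / 2 = r"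
  by (simp add: doubling_def)

lemma doubling_in: "r \<in> {a..b} \<Longrightarrow> doubling r \<in> {a..b}"
  using less by (auto simp: doubling_def endpoint_def)

lemma doubling_funcset: "doubling \<in> {a..b} \<rightarrow> {a..b}"
  using doubling_in by blast

lemma digit_in: "digit r \<in> A"
  using x y by (simp add: digit_def)

lemma digit_funcset: "digit \<in> S \<rightarrow> A"
  using digit_in by blast

lemma digit_eq_endpoint: "\<phi> a = x \<Longrightarrow> \<phi> b = y \<Longrightarrow> digit r = \<phi> (endpoint r)"
  by (simp add: digit_def endpoint_def)

text \<open>Halving towards an endpoint is undone by \<open>doubling\<close>, except at the centre \<open>(a + b) / 2\<close>,
  which \<open>endpoint\<close> assigns to \<open>a\<close> rather than \<open>b\<close>.\<close>
lemma endpoint_doubling_halfway: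
  assumes "e = a \<or> e = b" "p \<in> {a..b}"
  shows "endpoint ((e + p) / 2) = e \<and> doubling ((e + p) / 2) = p \<or>
    endpoint ((e + p) / 2) = p \<and> doubling ((e + p) / 2) = e"
  using assms less by (auto simp: doubling_def endpoint_def field_simps)

lemma midpoint_hom_iteration_solution:
  assumes "midpoint_hom {a..b} (\<lambda>u v. (u + v) / 2) A m \<phi>" "\<phi> a = x" "\<phi> b = y"
  shows "iteration_solution {a..b} m digit doubling \<phi>"
proof (rule iteration_solutionI)
  fix r assume r: "r \<in> {a..b}"
  have "endpoint r \<in> {a..b}" using endpoint_cases[of r] less by auto
  moreover have "doubling r \<in> {a..b}" using doubling_in[OF r] .
  ultimately
  have "\<phi> ((endpoint r + doubling r) / 2) = m (\<phi> (endpoint r)) (\<phi> (doubling r))"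
    using assms(1) unfolding midpoint_hom_def by blast
  then show "\<phi> r = m (digit r) (\<phi> (doubling r))"
    unfolding endpoint_doubling digit_eq_endpoint[OF assms(2,3)] .
qed

definition hom :: "real \<Rightarrow> 'a" where
  "hom = (SOME u. u \<in> {a..b} \<rightarrow>\<^sub>E A \<and> iteration_solution {a..b} m digit doubling u)"

lemma hom_PiE: "hom \<in> {a..b} \<rightarrow>\<^sub>E A"
  and hom_iteration_solution: "iteration_solution {a..b} m digit doubling hom"
proof -
  obtain u where "u \<in> {a..b} \<rightarrow>\<^sub>E A" "iteration_solution {a..b} m digit doubling u"
    by (rule iterative_nat_solution_exists[OF A_iterative digit_funcset doubling_funcset])
  then have "hom \<in> {a..b} \<rightarrow>\<^sub>E A \<and> iteration_solution {a..b} m digit doubling hom"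
    unfolding hom_def by (rule someI[where x = u, OF conjI])
  then show "hom \<in> {a..b} \<rightarrow>\<^sub>E A" "iteration_solution {a..b} m digit doubling hom" by auto
qed

lemma hom_in: "r \<in> {a..b} \<Longrightarrow> hom r \<in> A"
  using hom_PiE by auto

lemma hom_funcset: "hom \<in> {a..b} \<rightarrow> A"
  using hom_in by blast

lemma hom_endpoints: "hom a = x" "hom b = y"
proof -
  have a: "a \<in> {a..b}" and b: "b \<in> {a..b}" using less by auto
  have endpoints: "digit a = x" "doubling a = a" "digit b = y" "doubling b = b"
    using less by (simp_all add: digit_def doubling_def endpoint_def)
  have "hom a = m x (hom a)"
    using iteration_solutionD[OF hom_iteration_solution a] unfolding endpoints .
  from midpoint_fixed_point_eq[OF A_midpoint_set A_cancellative hom_in[OF a] x this[symmetric]]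
  show "hom a = x" .
  have "hom b = m y (hom b)"
    using iteration_solutionD[OF hom_iteration_solution b] unfolding endpoints .
  from midpoint_fixed_point_eq[OF A_midpoint_set A_cancellative hom_in[OF b] y this[symmetric]]
  show "hom b = y" .
qed

lemma hom_halfway:
  assumes "e = a \<or> e = b" "p \<in> {a..b}"
  shows "hom ((e + p) / 2) = m (hom e) (hom p)"
proof -
  have e: "e \<in> {a..b}" using assms(1) less by auto
  have half: "(e + p) / 2 \<in> {a..b}" using e assms(2) by auto
  have "hom ((e + p) / 2) = m (hom (endpoint ((e + p) / 2))) (hom (doubling ((e + p) / 2)))"
    using iteration_solutionD[OF hom_iteration_solution half] digit_eq_endpoint[OF hom_endpoints]
    by simp
  with endpoint_doubling_halfway[OF assms] show ?thesis
    using midpoint_set_commute[OF A_midpoint_set hom_in[OF e] hom_in[OF assms(2)]] by auto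
qed

lemma hom_centre:
  assumes p: "p \<in> {a..b}"
  shows "hom (((a + b) / 2 + p) / 2) = m (m x y) (hom p)"
proof -
  define e where "e = endpoint p"
  define e' where "e' = a + b - e"
  define q where "q = doubling p"
  have e: "e = a \<or> e = b" and e': "e' = a \<or> e' = b"
    using endpoint_cases[of p] by (auto simp: e_def e'_def)
  then have e_in: "e \<in> {a..b}" "e' \<in> {a..b}" using less by auto
  have q: "q \<in> {a..b}" unfolding q_def by (rule doubling_in[OF p])
  have p_eq: "p = (e + q) / 2" using endpoint_doubling[of p] by (simp add: e_def q_def)
  have centre_eq: "((a + b) / 2 + p) / 2 = (e + (e' + q) / 2) / 2"
    by (simp add: p_eq e'_def field_simps)
  have "(e' + q) / 2 \<in> {a..b}" using e_in q by auto
  from hom_halfway[OF e this]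
  have "hom (((a + b) / 2 + p) / 2) = m (hom e) (hom ((e' + q) / 2))" by (simp only: centre_eq)
  also have "\<dots> = m (m (hom e) (hom e)) (m (hom e') (hom q))"
    using hom_halfway[OF e' q] midpoint_set_idem[OF A_midpoint_set hom_in[OF e_in(1)]] by simp
  also have "\<dots> = m (m (hom e) (hom e')) (m (hom e) (hom q))"
    using midpoint_set_medial[OF A_midpoint_set] hom_in e_in q by blast
  also have "m (hom e) (hom e') = m x y"
    using e e' less midpoint_set_commute[OF A_midpoint_set x y] by (auto simp: e'_def hom_endpoints)
  also have "m (hom e) (hom q) = hom p" using hom_halfway[OF e q, folded p_eq] by (rule sym)
  finally show ?thesis .
qed

lemma hom_midpoint_step:
  assumes r: "r \<in> {a..b}" and s: "s \<in> {a..b}"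
  shows "hom ((r + s) / 2) = m (m (digit r) (digit s)) (hom ((doubling r + doubling s) / 2))"
proof -
  define w where "w = (doubling r + doubling s) / 2"
  from doubling_in[OF r] doubling_in[OF s] have w: "w \<in> {a..b}" by (auto simp: w_def)
  have rs: "(r + s) / 2 = ((endpoint r + endpoint s) / 2 + w) / 2"
    using endpoint_doubling[of r] endpoint_doubling[of s] by (simp add: w_def field_simps)
  have digits: "m (digit r) (digit s) = m (hom (endpoint r)) (hom (endpoint s))"
    by (simp add: digit_eq_endpoint[OF hom_endpoints])
  consider (equal) "endpoint r = endpoint s" | (distinct) "endpoint r \<noteq> endpoint s"
    by blast
  then have "hom (((endpoint r + endpoint s) / 2 + w) / 2) =
      m (m (hom (endpoint r)) (hom (endpoint s))) (hom w)"
  proof cases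
    case equal
    have "hom (endpoint r) \<in> A" using endpoint_cases[of r] less hom_in by auto
    with hom_halfway[OF endpoint_cases w] show ?thesis
      using equal midpoint_set_idem[OF A_midpoint_set] by simp
  next
    case distinct
    then have "endpoint r + endpoint s = a + b" "m (hom (endpoint r)) (hom (endpoint s)) = m x y"
      using endpoint_cases[of r] endpoint_cases[of s] midpoint_set_commute[OF A_midpoint_set x y]
      by (auto simp: hom_endpoints)
    with hom_centre[OF w] show ?thesis by simp
  qed
  then show ?thesis by (simp add: rs digits w_def)
qed

lemma hom_midpoint:
  assumes "r \<in> {a..b}" "s \<in> {a..b}"
  shows "hom ((r + s) / 2) = m (hom r) (hom s)"
proof -
  let ?S = "{a..b} \<times> {a..b}"
  have digit2: "(\<lambda>(r, s). m (digit r) (digit s)) \<in> ?S \<rightarrow> A"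
    using midpoint_set_closed[OF A_midpoint_set digit_in digit_in] by auto
  have doubling2: "map_prod doubling doubling \<in> ?S \<rightarrow> ?S"
  proof
    fix z assume "z \<in> ?S"
    then obtain r s where "z = (r, s)" and r: "r \<in> {a..b}" and s: "s \<in> {a..b}" by blast
    with doubling_in[OF r] doubling_in[OF s] show "map_prod doubling doubling z \<in> ?S" by simp
  qed
  have F: "(\<lambda>(r, s). hom ((r + s) / 2)) \<in> ?S \<rightarrow> A"
    and G: "(\<lambda>(r, s). m (hom r) (hom s)) \<in> ?S \<rightarrow> A"
    by (auto intro!: hom_in midpoint_set_closed[OF A_midpoint_set])
  have F_solution: "iteration_solution ?S m (\<lambda>(r, s). m (digit r) (digit s))
      (map_prod doubling doubling) (\<lambda>(r, s). hom ((r + s) / 2))"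
  proof (rule iteration_solutionI)
    fix z assume "z \<in> ?S"
    then obtain r s where z: "z = (r, s)" "r \<in> {a..b}" "s \<in> {a..b}" by blast
    with hom_midpoint_step[OF z(2,3)]
    show "(\<lambda>(r, s). hom ((r + s) / 2)) z = m ((\<lambda>(r, s). m (digit r) (digit s)) z)
        ((\<lambda>(r, s). hom ((r + s) / 2)) (map_prod doubling doubling z))"
      by simp
  qed
  have G_solution: "iteration_solution ?S m (\<lambda>(r, s). m (digit r) (digit s))
      (map_prod doubling doubling) (\<lambda>(r, s). m (hom r) (hom s))"
    by (rule iteration_solution_pairs[OF A_midpoint_set digit_funcset doubling_funcset hom_funcset
          hom_iteration_solution])
  from assms have "(r, s) \<in> ?S" by simp
  from iterative_nat_solution_unique[OF A_iterative digit2 doubling2 F F_solution G G_solution this]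
  show ?thesis by simp
qed

theorem unique_midpoint_hom:
  "\<exists>!h. h \<in> {a..b} \<rightarrow>\<^sub>E A \<and>
    midpoint_hom {a..b} (\<lambda>u v. (u + v) / 2) A m h \<and> h a = x \<and> h b = y"
proof (rule ex1I)
  have "midpoint_hom {a..b} (\<lambda>u v. (u + v) / 2) A m hom"
    unfolding midpoint_hom_def using hom_funcset hom_midpoint by blast
  with hom_PiE hom_endpoints
  show "hom \<in> {a..b} \<rightarrow>\<^sub>E A \<and> midpoint_hom {a..b} (\<lambda>u v. (u + v) / 2) A m hom \<and>
      hom a = x \<and> hom b = y"
    by blast
next
  fix \<phi>
  assume \<phi>: "\<phi> \<in> {a..b} \<rightarrow>\<^sub>E A \<and> midpoint_hom {a..b} (\<lambda>u v. (u + v) / 2) A m \<phi> \<and>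
    \<phi> a = x \<and> \<phi> b = y"
  then have \<phi>_funcset: "\<phi> \<in> {a..b} \<rightarrow> A"
    and \<phi>_solution: "iteration_solution {a..b} m digit doubling \<phi>"
    using midpoint_hom_iteration_solution by (auto simp: PiE_iff)
  show "\<phi> = hom"
  proof (rule PiE_ext[OF _ hom_PiE])
    show "\<phi> \<in> {a..b} \<rightarrow>\<^sub>E A" using \<phi> by blast
    show "\<phi> r = hom r" if "r \<in> {a..b}" for r
      by (rule iterative_nat_solution_unique[OF A_iterative digit_funcset doubling_funcset
            \<phi>_funcset \<phi>_solution hom_funcset hom_iteration_solution that])
  qed
qed

end

theorem mainTheorem15:
  fixes a b :: real
  assumes "a < b"
  shows "m_convex_body TYPE('x) {a..b} (\<lambda>x y. (x + y) / 2) \<and>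
    (\<forall>(A::'a set) m. m_convex_body TYPE(nat) A m \<longrightarrow>
       (\<forall>x\<in>A. \<forall>y\<in>A. \<exists>!h. h \<in> {a..b} \<rightarrow>\<^sub>E A \<and>
          midpoint_hom {a..b} (\<lambda>u v. (u + v) / 2) A m h \<and> h a = x \<and> h b = y))"
proof (intro conjI allI impI ballI)
  show "m_convex_body TYPE('x) {a..b} (\<lambda>x y. (x + y) / 2)"
    by (rule m_convex_body_interval)
  fix A :: "'a set" and m x y
  assume "m_convex_body TYPE(nat) A m" "x \<in> A" "y \<in> A"
  then interpret interval_universal A m a b x y
    using assms by unfold_locales
  show "\<exists>!h. h \<in> {a..b} \<rightarrow>\<^sub>E A \<and>
      midpoint_hom {a..b} (\<lambda>u v. (u + v) / 2) A m h \<and> h a = x \<and> h b = y"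
    by (rule unique_midpoint_hom)
qed

end
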